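(* Let $\delta$ be a positive integer and let $a_{\delta,i}$ be the coefficient of $x^i$ in $$p_\delta(x)=\left(\frac{1+\sqrt{1-4x}}{2}\right)^{\delta+1}+\left(\frac{1-\sqrt{1-4x}}{2}\right)^{\delta+1}$$ (so $a_{\delta,0}=1$). For $j\ge1$ let $\omega_j=\zeta(2j,\delta)$ (alternatively $\omega_j=\zeta(2j-1,\delta)$; the claim holds for either choice). Then for every integer $r$ with $1\le r\le\delta$, setting $\omega_0=\frac{r}{\delta+1}$, $$\sum_{0\le i\le r}\omega_{r-i}\,a_{\delta,i}=0.$$
   Context: For positive integers $m$ and $\delta$, a $\delta$-deviation set of size $m$ is a finite sequence $(\alpha_1,\dots,\alpha_\ell)$ of positive integers such that (i) $\sum_i\alpha_i=m$; (ii) $\big|\sum_i\alpha_{2i-1}-\sum_i\alpha_{2i}\big|\le 1$; (iii) $\big|\sum_{1\le i\le j}(-1)^{i-1}\alpha_i\big|\le\delta$ for every $j\ge1$; and $\zeta(m,\delta)$ is the number of $\delta$-deviation sets of size $m$. *)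

theory Defs
  imports Complex_Main "HOL-Computational_Algebra.Formal_Power_Series"
begin

(* alternating partial sum  sum_{1<=i<=j} (-1)^(i-1) alpha_i  of the list (0-indexed) *)
definition alt_psum :: "nat list \<Rightarrow> nat \<Rightarrow> int" where
  "alt_psum xs j = (\<Sum>i<j. (-1) ^ i * int (xs ! i))"

definition deviation_set :: "nat \<Rightarrow> nat \<Rightarrow> nat list \<Rightarrow> bool" where
  "deviation_set m \<delta> xs \<longleftrightarrow>
     (\<forall>x\<in>set xs. x > 0) \<and>
     sum_list xs = m \<and>
     \<bar>alt_psum xs (length xs)\<bar> \<le> 1 \<and>
     (\<forall>j. 1 \<le> j \<longrightarrow> j \<le> length xs \<longrightarrow> \<bar>alt_psum xs j\<bar> \<le> int \<delta>)"

definition zeta :: "nat \<Rightarrow> nat \<Rightarrow> nat" where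
  "zeta m \<delta> = card {xs. deviation_set m \<delta> xs}"

definition sqrt_fps :: "real fps" where
  "sqrt_fps = fps_radical (\<lambda>k x. root k x) 2 (1 - 4 * fps_X)"

definition p_fps :: "nat \<Rightarrow> real fps" where
  "p_fps \<delta> = (fps_const (1/2) * (1 + sqrt_fps)) ^ (\<delta> + 1)
             + (fps_const (1/2) * (1 - sqrt_fps)) ^ (\<delta> + 1)"

definition a_coeff :: "nat \<Rightarrow> nat \<Rightarrow> real" where
  "a_coeff \<delta> i = fps_nth (p_fps \<delta>) i"

end

theory Submission
  imports Defs
begin

text \<open>
  For \<open>m \<le> 2\<delta>\<close> the partial-sum bound (iii) follows from (ii), so a \<open>\<delta>\<close>-deviation set of
  size \<open>m\<close> is a composition whose entries at odd and even positions sum to \<open>\<lceil>m/2\<rceil>\<close> and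
  \<open>\<lfloor>m/2\<rfloor>\<close>; counting these gives \<open>\<zeta>(2j,\<delta>) = \<zeta>(2j-1,\<delta>) = C(2j-1,j) = C(2j,j)/2\<close>,
  half the coefficients of \<open>1/\<surd>(1-4x)\<close>.
  With \<open>u, v = (1 \<plusminus> \<surd>(1-4x))/2\<close> and \<open>n = \<delta> + 1\<close> one has \<open>u + v = 1\<close>, \<open>uv = x\<close> and
  \<open>p = u\<^sup>n + v\<^sup>n\<close> satisfies \<open>n (1/\<surd>(1-4x) - 1) p + 2 x p' = 2n v\<^sup>n/\<surd>(1-4x)\<close>.
  Since \<open>x\<^sup>n\<close> divides \<open>v\<^sup>n\<close>, comparing the coefficients of \<open>x\<^sup>r\<close> for \<open>r < n\<close> gives the claim.
\<close>

unbundle fps_syntax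

lemma Suc_times_central_binomial_Suc:
  "Suc m * ((2 * Suc m) choose Suc m) = 2 * (2 * m + 1) * ((2 * m) choose m)"
proof -
  have "Suc m * ((2 * Suc m) choose Suc m) = 2 * (((2 * m + 1) choose m) * Suc m)"
    using Suc_times_binomial[of m "2 * m + 1"] by (simp add: algebra_simps)
  also have "((2 * m + 1) choose m) * Suc m = (2 * m + 1) * ((2 * m) choose m)"
    using Suc_times_binomial_eq[of "2 * m" m] binomial_symmetric[of m "2 * m + 1"]
    by (simp add: mult.commute)
  finally show ?thesis by simp
qed

lemma central_binomial_eq_double:
  assumes "0 < k"
  shows "(2 * k) choose k = 2 * ((2 * k - 1) choose k)"
proof -
  obtain m where k: "k = Suc m" using assms by (cases k) auto
  have "(2 * k - 1) choose m = (2 * k - 1) choose k"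
    using binomial_symmetric[of m "2 * m + 1"] k by simp
  then show ?thesis using k by simp
qed

definition central_binomial_fps :: "real fps" where
  "central_binomial_fps = Abs_fps (\<lambda>m. real ((2 * m) choose m))"

lemma sqrt_fps_nth_0 [simp]: "sqrt_fps $ 0 = 1"
  by (simp add: sqrt_fps_def)

lemma sqrt_fps_squared: "sqrt_fps ^ 2 = 1 - 4 * fps_X"
proof -
  have "fps_radical (\<lambda>k x. root k x) (Suc 1) (1 - 4 * fps_X) ^ Suc 1 = (1 - 4 * fps_X :: real fps)"
    by (subst power_radical[symmetric]) simp_all
  then show ?thesis by (simp add: sqrt_fps_def numeral_2_eq_2)
qed

lemma sqrt_fps_mult_deriv: "sqrt_fps * fps_deriv sqrt_fps = - 2"
proof -
  have "2 * (sqrt_fps * fps_deriv sqrt_fps) = fps_deriv (sqrt_fps ^ 2)"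
    by (simp add: fps_deriv_power' algebra_simps)
  also have "\<dots> = 2 * (- 2)"
    by (simp add: sqrt_fps_squared)
  finally show ?thesis
    by (subst (asm) mult_left_cancel) simp_all
qed

lemma deriv_central_binomial_fps:
  "fps_deriv central_binomial_fps * (1 - 4 * fps_X) = 2 * central_binomial_fps"
proof (rule fps_ext)
  fix m
  have "real (Suc m * ((2 * Suc m) choose Suc m)) = real (2 * (2 * m + 1) * ((2 * m) choose m))"
    by (simp only: Suc_times_central_binomial_Suc)
  then show "(fps_deriv central_binomial_fps * (1 - 4 * fps_X)) $ m = (2 * central_binomial_fps) $ m"
    by (cases m) (simp_all add: central_binomial_fps_def numeral_fps_const algebra_simps
                    del: binomial_Suc_Suc)
qed

lemma inverse_sqrt_fps: "inverse sqrt_fps = central_binomial_fps"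
proof -
  let ?E = "central_binomial_fps * sqrt_fps"
  have "sqrt_fps * fps_deriv ?E
      = fps_deriv central_binomial_fps * sqrt_fps ^ 2
        + central_binomial_fps * (sqrt_fps * fps_deriv sqrt_fps)"
    by (simp add: algebra_simps power2_eq_square)
  also have "\<dots> = 0"
    by (simp add: sqrt_fps_squared deriv_central_binomial_fps sqrt_fps_mult_deriv)
  finally have "fps_deriv ?E = 0"
    using sqrt_fps_nth_0 by (metis mult_eq_0_iff fps_zero_nth zero_neq_one)
  then have "?E = fps_const (?E $ 0)"
    unfolding fps_deriv_eq_0_iff .
  also have "?E $ 0 = 1"
    by (simp add: central_binomial_fps_def)
  finally show ?thesis
    by (intro fps_inverse_unique) (simp add: mult.commute)
qed

definition root_plus :: "real fps" where
  "root_plus = fps_const (1 / 2) * (1 + sqrt_fps)"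

definition root_minus :: "real fps" where
  "root_minus = fps_const (1 / 2) * (1 - sqrt_fps)"

lemma p_fps_eq_power_sum_roots: "p_fps \<delta> = root_plus ^ (\<delta> + 1) + root_minus ^ (\<delta> + 1)"
  by (simp add: p_fps_def root_plus_def root_minus_def)

lemma double_root_minus: "2 * root_minus = 1 - sqrt_fps"
  by (simp add: root_minus_def numeral_fps_const fps_const_mult[symmetric] mult.assoc[symmetric])

lemma root_plus_add_root_minus: "root_plus + root_minus = 1"
  by (simp add: root_plus_def root_minus_def algebra_simps fps_const_add[symmetric])

lemma root_plus_mult_root_minus: "root_plus * root_minus = fps_X"
proof -
  have "root_plus * root_minus = fps_const (1 / 4) * (1 - sqrt_fps ^ 2)"
    by (simp add: root_plus_def root_minus_def algebra_simps power2_eq_square fps_const_mult[symmetric])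
  also have "\<dots> = fps_X"
    by (simp add: sqrt_fps_squared numeral_fps_const fps_const_mult[symmetric] mult.assoc[symmetric])
  finally show ?thesis .
qed

lemma sqrt_fps_mult_deriv_root_plus: "sqrt_fps * fps_deriv root_plus = - 1"
proof -
  have "sqrt_fps * fps_deriv root_plus = fps_const (1 / 2) * (sqrt_fps * fps_deriv sqrt_fps)"
    by (simp add: root_plus_def algebra_simps)
  also have "\<dots> = - 1"
    by (simp add: sqrt_fps_mult_deriv numeral_fps_const fps_const_mult[symmetric] flip: fps_const_neg)
  finally show ?thesis .
qed

lemma sqrt_fps_mult_deriv_root_minus: "sqrt_fps * fps_deriv root_minus = 1"
proof -
  have "sqrt_fps * fps_deriv root_minus = - fps_const (1 / 2) * (sqrt_fps * fps_deriv sqrt_fps)"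
    by (simp add: root_minus_def algebra_simps flip: fps_const_neg)
  also have "\<dots> = 1"
    by (simp add: sqrt_fps_mult_deriv numeral_fps_const fps_const_mult[symmetric] flip: fps_const_neg)
  finally show ?thesis .
qed

lemma power_sum_identity:
  fixes u v :: "'a::comm_ring_1"
  assumes "u + v = 1"
  shows "v * (u ^ Suc k + v ^ Suc k) + u * v * (v ^ k - u ^ k) = v ^ Suc k"
proof -
  have "v * (u ^ Suc k + v ^ Suc k) + u * v * (v ^ k - u ^ k) = (u + v) * v ^ Suc k"
    by (simp add: algebra_simps)
  with assms show ?thesis by simp
qed

lemma sqrt_fps_mult_deriv_p_fps:
  "sqrt_fps * fps_deriv (p_fps \<delta>) = of_nat (\<delta> + 1) * (root_minus ^ \<delta> - root_plus ^ \<delta>)"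
proof -
  have "sqrt_fps * fps_deriv (p_fps \<delta>)
      = of_nat (\<delta> + 1) * ((sqrt_fps * fps_deriv root_plus) * root_plus ^ \<delta>
                            + (sqrt_fps * fps_deriv root_minus) * root_minus ^ \<delta>)"
    by (simp only: p_fps_eq_power_sum_roots fps_deriv_add fps_deriv_power')
       (simp add: algebra_simps)
  then show ?thesis
    by (simp add: sqrt_fps_mult_deriv_root_plus sqrt_fps_mult_deriv_root_minus)
qed

lemma p_fps_differential_equation:
  "of_nat (\<delta> + 1) * (inverse sqrt_fps - 1) * p_fps \<delta> + 2 * fps_X * fps_deriv (p_fps \<delta>)
     = 2 * of_nat (\<delta> + 1) * inverse sqrt_fps * root_minus ^ (\<delta> + 1)"
proof -
  let ?n = "of_nat (\<delta> + 1) :: real fps" and ?c = "inverse sqrt_fps"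
  have unit: "?c * sqrt_fps = 1"
    by (simp add: inverse_mult_eq_1)
  have "?n * (1 - sqrt_fps) * p_fps \<delta> + 2 * fps_X * (sqrt_fps * fps_deriv (p_fps \<delta>))
      = ?n * (2 * root_minus) * p_fps \<delta>
        + 2 * (root_plus * root_minus) * (?n * (root_minus ^ \<delta> - root_plus ^ \<delta>))"
    by (simp only: sqrt_fps_mult_deriv_p_fps root_plus_mult_root_minus double_root_minus)
  also have "\<dots> = 2 * ?n * (root_minus * (root_plus ^ Suc \<delta> + root_minus ^ Suc \<delta>)
                  + root_plus * root_minus * (root_minus ^ \<delta> - root_plus ^ \<delta>))"
    by (simp add: p_fps_eq_power_sum_roots algebra_simps)
  also have "\<dots> = 2 * ?n * root_minus ^ (\<delta> + 1)"
    using power_sum_identity[OF root_plus_add_root_minus] by simp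
  finally have times_sqrt: "?n * (1 - sqrt_fps) * p_fps \<delta> + 2 * fps_X * (sqrt_fps * fps_deriv (p_fps \<delta>))
                  = 2 * ?n * root_minus ^ (\<delta> + 1)" .
  have "?n * (?c - 1) * p_fps \<delta> + 2 * fps_X * fps_deriv (p_fps \<delta>)
      = ?n * (?c - ?c * sqrt_fps) * p_fps \<delta> + 2 * fps_X * (?c * sqrt_fps * fps_deriv (p_fps \<delta>))"
    by (simp only: unit mult_1_left mult_1_right)
  also have "\<dots> = ?c * (?n * (1 - sqrt_fps) * p_fps \<delta> + 2 * fps_X * (sqrt_fps * fps_deriv (p_fps \<delta>)))"
    by (simp add: algebra_simps)
  also have "\<dots> = 2 * ?n * ?c * root_minus ^ (\<delta> + 1)"
    unfolding times_sqrt by (simp only: ac_simps)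
  finally show ?thesis .
qed

lemma inverse_sqrt_fps_minus_one_nth:
  "(inverse sqrt_fps - 1) $ k = (if k = 0 then 0 else 2 * real ((2 * k - 1) choose k))"
  by (simp add: inverse_sqrt_fps central_binomial_fps_def central_binomial_eq_double)

lemma mult_root_minus_power_nth_eq_0:
  assumes "k < n"
  shows "(f * root_minus ^ n) $ k = 0"
proof -
  have "root_minus = fps_shift 1 root_minus * fps_X"
    by (rule fps_ext) (simp add: root_minus_def)
  then have eq: "f * root_minus ^ n = f * fps_shift 1 root_minus ^ n * fps_X ^ n"
    by (metis mult.assoc power_mult_distrib)
  show ?thesis
    unfolding eq fps_X_power_mult_right_nth using assms by simp
qed

lemma weighted_sum_a_coeff_eq_0:
  fixes \<delta> r :: nat
  assumes "r \<le> \<delta>"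
  shows "(\<Sum>i=0..r. (if r - i = 0 then real r / real (\<delta> + 1)
                     else real ((2 * (r - i) - 1) choose (r - i))) * a_coeff \<delta> i) = 0"
    (is "(\<Sum>i=0..r. ?w i * _) = 0")
proof -
  let ?p = "p_fps \<delta>" and ?c = "inverse sqrt_fps - 1" and ?n = "real (\<delta> + 1)"
  have "(of_nat (\<delta> + 1) * ?c * ?p + 2 * fps_X * fps_deriv ?p) $ r = 0"
    using mult_root_minus_power_nth_eq_0[of r "\<delta> + 1"] assms
    by (simp only: p_fps_differential_equation)
  moreover have "(of_nat (\<delta> + 1) * ?c * ?p + 2 * fps_X * fps_deriv ?p) $ r
               = ?n * (\<Sum>i=0..r. ?p $ i * ?c $ (r - i)) + 2 * real r * ?p $ r"
    by (cases r) (simp_all add: fps_mult_nth[of ?p ?c] mult.commute[of ?c] mult.assoc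
                                 numeral_fps_const flip: fps_of_nat del: of_nat_Suc)
  moreover have "2 * ?n * (?w i * a_coeff \<delta> i)
               = ?n * (?p $ i * ?c $ (r - i)) + (if i = r then 2 * real r * ?p $ r else 0)"
    if "i \<in> {0..r}" for i
    using that by (cases "i = r")
      (simp_all add: a_coeff_def inverse_sqrt_fps_minus_one_nth field_simps del: fps_sub_nth)
  then have "2 * ?n * (\<Sum>i=0..r. ?w i * a_coeff \<delta> i)
           = ?n * (\<Sum>i=0..r. ?p $ i * ?c $ (r - i)) + 2 * real r * ?p $ r"
    by (simp add: sum_distrib_left sum.distrib)
  ultimately show ?thesis
    by simp
qed

fun even_part :: "nat list \<Rightarrow> nat" and odd_part :: "nat list \<Rightarrow> nat" where
  "even_part [] = 0"
| "even_part (x # xs) = x + odd_part xs"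
| "odd_part [] = 0"
| "odd_part (x # xs) = even_part xs"

lemma sum_list_eq_even_part_add_odd_part: "sum_list xs = even_part xs + odd_part xs"
  by (induction xs) auto

lemma alt_psum_Cons: "alt_psum (x # xs) (Suc j) = int x - alt_psum xs j"
  unfolding alt_psum_def sum.lessThan_Suc_shift by (simp add: sum_negf del: sum.lessThan_Suc)

lemma alt_psum_length: "alt_psum xs (length xs) = int (even_part xs) - int (odd_part xs)"
  by (induction xs) (simp_all add: alt_psum_Cons, simp add: alt_psum_def)

lemma alt_psum_bounds:
  assumes "j \<le> length xs"
  shows "- int (odd_part xs) \<le> alt_psum xs j \<and> alt_psum xs j \<le> int (even_part xs)"
  using assms
proof (induction xs arbitrary: j)
  case Nil
  then show ?case by (simp add: alt_psum_def)
next
  case (Cons x xs)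
  show ?case
  proof (cases j)
    case (Suc i)
    with Cons.prems Cons.IH[of i] show ?thesis
      by (simp add: alt_psum_Cons)
  qed (simp add: alt_psum_def)
qed

definition alternating_compositions :: "nat \<Rightarrow> nat \<Rightarrow> nat list set" where
  "alternating_compositions a b =
     {xs. (\<forall>x\<in>set xs. 0 < x) \<and> even_part xs = a \<and> odd_part xs = b}"

lemma finite_alternating_compositions: "finite (alternating_compositions a b)"
proof (rule finite_subset)
  show "alternating_compositions a b \<subseteq> {xs. set xs \<subseteq> {..a + b} \<and> length xs \<le> a + b}"
  proof
    fix xs assume "xs \<in> alternating_compositions a b"
    then have pos: "\<forall>x\<in>set xs. 0 < x" and sum: "sum_list xs = a + b"
      by (simp_all add: alternating_compositions_def sum_list_eq_even_part_add_odd_part)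
    have "length xs \<le> sum_list xs"
      using pos by (induction xs) (auto simp: Suc_le_eq)
    with sum show "xs \<in> {xs. set xs \<subseteq> {..a + b} \<and> length xs \<le> a + b}"
      using member_le_sum_list[of _ xs] by auto
  qed
qed (simp add: finite_lists_length_le)

lemma alternating_compositions_0:
  "alternating_compositions 0 b = (if b = 0 then {[]} else {})"
  by (auto simp: alternating_compositions_def elim: even_part.elims)

lemma alternating_compositions_pos:
  assumes "0 < a"
  shows "alternating_compositions a b
           = (\<Union>k<a. (#) (Suc k) ` alternating_compositions b (a - Suc k))"
proof (intro equalityI subsetI)
  fix xs assume xs: "xs \<in> alternating_compositions a b"
  then obtain y ys where "xs = y # ys"
    using assms by (cases xs) (auto simp: alternating_compositions_def)
  with xs show "xs \<in> (\<Union>k<a. (#) (Suc k) ` alternating_compositions b (a - Suc k))"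
    by (auto simp: alternating_compositions_def image_iff intro!: bexI[of _ "y - 1"])
qed (auto simp: alternating_compositions_def)

definition composition_count :: "nat \<Rightarrow> nat \<Rightarrow> nat" where
  "composition_count a b = (if a = 0 then (if b = 0 then 1 else 0) else (a + b - 1) choose b)"

lemma sum_composition_count:
  assumes "0 < a"
  shows "(\<Sum>c<a. composition_count b c) = composition_count a b"
proof (cases "b = 0")
  case True
  then show ?thesis
    using assms by (simp add: composition_count_def)
next
  case False
  have "(\<Sum>c<a. composition_count b c) = (\<Sum>c\<le>a - 1. (b - 1 + c) choose c)"
    using assms False by (intro sum.cong) (auto simp: composition_count_def)
  also have "\<dots> = Suc (b - 1 + (a - 1)) choose (a - 1)"
    by (rule sum_choose_lower)
  also have "\<dots> = (a + b - 1) choose b"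
    using assms False binomial_symmetric[of "a - 1" "a + b - 1"]
    by (simp add: Suc_diff_Suc add.commute)
  finally show ?thesis
    using assms by (simp add: composition_count_def)
qed

lemma card_alternating_compositions:
  "card (alternating_compositions a b) = composition_count a b"
proof (induction "a + b" arbitrary: a b rule: less_induct)
  case less
  show ?case
  proof (cases "a = 0")
    case True
    then show ?thesis
      by (simp add: alternating_compositions_0 composition_count_def)
  next
    case False
    then have "card (alternating_compositions a b)
             = (\<Sum>k<a. card (alternating_compositions b (a - Suc k)))"
      by (simp add: alternating_compositions_pos, subst card_UN_disjoint)
         (auto simp: finite_alternating_compositions card_image)
    also have "\<dots> = (\<Sum>k<a. composition_count b (a - Suc k))"
      using False by (intro sum.cong refl less) auto
    also have "\<dots> = composition_count a b"
      using False by (simp add: sum.nat_diff_reindex sum_composition_count)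
    finally show ?thesis .
  qed
qed

lemma deviation_set_iff_balanced:
  assumes "m \<le> 2 * \<delta>"
  shows "deviation_set m \<delta> xs \<longleftrightarrow>
           (\<forall>x\<in>set xs. 0 < x) \<and> even_part xs + odd_part xs = m
           \<and> \<bar>int (even_part xs) - int (odd_part xs)\<bar> \<le> 1"
proof -
  have "\<bar>alt_psum xs j\<bar> \<le> int \<delta>"
    if "even_part xs + odd_part xs = m" "\<bar>int (even_part xs) - int (odd_part xs)\<bar> \<le> 1"
       "j \<le> length xs" for j
    using alt_psum_bounds[OF that(3)] that(1,2) assms by linarith
  then show ?thesis
    by (auto simp: deviation_set_def alt_psum_length sum_list_eq_even_part_add_odd_part)
qed

lemma zeta_even_eq:
  assumes "0 < j" "j \<le> \<delta>"
  shows "zeta (2 * j) \<delta> = (2 * j - 1) choose j"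
proof -
  have "{xs. deviation_set (2 * j) \<delta> xs} = alternating_compositions j j"
    using assms by (auto simp: deviation_set_iff_balanced alternating_compositions_def)
  then show ?thesis
    using assms by (simp add: zeta_def card_alternating_compositions composition_count_def mult_2)
qed

lemma zeta_odd_eq:
  assumes "0 < j" "j \<le> \<delta>"
  shows "zeta (2 * j - 1) \<delta> = (2 * j - 1) choose j"
proof -
  obtain i where j: "j = Suc i"
    using assms by (cases j) auto
  have "{xs. deviation_set (2 * j - 1) \<delta> xs}
      = alternating_compositions j i \<union> alternating_compositions i j"
    using assms j by (auto simp: deviation_set_iff_balanced alternating_compositions_def)
  moreover have "alternating_compositions j i \<inter> alternating_compositions i j = {}"
    using j by (auto simp: alternating_compositions_def)
  ultimately have "zeta (2 * j - 1) \<delta> = composition_count j i + composition_count i j"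
    by (simp add: zeta_def card_Un_disjoint finite_alternating_compositions
                  card_alternating_compositions)
  also have "\<dots> = (2 * j - 1) choose j"
    using j by (cases i) (simp_all add: composition_count_def mult_2)
  finally show ?thesis .
qed

theorem corollary2:
  fixes \<delta> r :: nat
  assumes "\<delta> \<ge> 1" and "1 \<le> r" and "r \<le> \<delta>"
  shows "(\<Sum>i=0..r. (if r - i = 0 then real r / real (\<delta> + 1)
                        else real (zeta (2 * (r - i)) \<delta>)) * a_coeff \<delta> i) = 0
       \<and> (\<Sum>i=0..r. (if r - i = 0 then real r / real (\<delta> + 1)
                        else real (zeta (2 * (r - i) - 1) \<delta>)) * a_coeff \<delta> i) = 0"
proof -
  have "zeta (2 * (r - i)) \<delta> = (2 * (r - i) - 1) choose (r - i)"
       "zeta (2 * (r - i) - 1) \<delta> = (2 * (r - i) - 1) choose (r - i)"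
    if "r - i \<noteq> 0" for i
    using that assms zeta_even_eq[of "r - i" \<delta>] zeta_odd_eq[of "r - i" \<delta>] by auto
  then show ?thesis
    using weighted_sum_a_coeff_eq_0[OF \<open>r \<le> \<delta>\<close>] by (simp cong: if_cong)
qed

end
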